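(* Let $m,n,s,c$ be positive integers such that $2\leq s\leq n$ and $ms=2n$. A magic rectangle set $\mathrm{MRS}(m,n;s,2;c)$ exists if and only if $s\geq 4$ is even.
   Context: A partially filled array is an array in which some cells may be empty. A magic rectangle set with empty cells $\mathrm{MRS}(m,n;s,k;c)$ is a set of $c$ partially filled $m\times n$ arrays with integer entries such that each integer of $\{1,2,\ldots,nkc\}$ appears exactly once, in exactly one of the arrays (and no other entries occur); in every array each row contains exactly $s$ filled cells and each column exactly $k$ filled cells; and there exist integers $x,y$ such that in every array each row sums to $x$ and each column sums to $y$. *)

theory Defs
  imports Main
begin

text \<open>A set of c partially filled m x n arrays is modelled as
  A :: nat \<Rightarrow> nat \<Rightarrow> nat \<Rightarrow> nat option, where A a i j is the
  entry of array a (a < c) in row i (i < m), column j (j < n); None = empty cell.\<close>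

definition filled_cells :: "nat \<Rightarrow> nat \<Rightarrow> nat \<Rightarrow> (nat \<Rightarrow> nat \<Rightarrow> nat \<Rightarrow> nat option) \<Rightarrow> (nat \<times> nat \<times> nat) set" where
  "filled_cells m n c A = {(a, i, j). a < c \<and> i < m \<and> j < n \<and> A a i j \<noteq> None}"

definition cell_val :: "nat option \<Rightarrow> nat" where
  "cell_val v = (case v of None \<Rightarrow> 0 | Some x \<Rightarrow> x)"

definition is_MRS :: "nat \<Rightarrow> nat \<Rightarrow> nat \<Rightarrow> nat \<Rightarrow> nat \<Rightarrow> (nat \<Rightarrow> nat \<Rightarrow> nat \<Rightarrow> nat option) \<Rightarrow> bool" where
  "is_MRS m n s k c A \<longleftrightarrow>
     bij_betw (\<lambda>(a, i, j). the (A a i j)) (filled_cells m n c A) {1..n * k * c} \<and>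
     (\<forall>a<c. \<forall>i<m. card {j. j < n \<and> A a i j \<noteq> None} = s) \<and>
     (\<forall>a<c. \<forall>j<n. card {i. i < m \<and> A a i j \<noteq> None} = k) \<and>
     (\<exists>x y. (\<forall>a<c. \<forall>i<m. (\<Sum>j<n. cell_val (A a i j)) = x) \<and>
            (\<forall>a<c. \<forall>j<n. (\<Sum>i<m. cell_val (A a i j)) = y))"

definition MRS_exists :: "nat \<Rightarrow> nat \<Rightarrow> nat \<Rightarrow> nat \<Rightarrow> nat \<Rightarrow> bool" where
  "MRS_exists m n s k c \<longleftrightarrow> (\<exists>A. is_MRS m n s k c A)"

end

theory Submission
  imports Defs
begin

(* Summing all entries of an MRS(m, n; s, k; c) in two ways gives the row sum
   x = s (nkc + 1) / 2; for k = 2 the factor 2nc + 1 is odd, so s is even.  If s = 2 then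
   m = n, so row and column sums coincide.  For a filled cell (i, j), its column partner (i', j)
   and the row partner (i', j') of the latter this gives v(i, j) + v(i', j) = v(i', j) + v(i', j'),
   so two distinct cells carry the same number.

   Sufficiency for s = 2t, t >= 2, n = mt.  Split the columns of array a into m blocks of t
   and give block i the class g = a m + i.  Column p of block i carries a label v in row i and
   its complement 2nc + 1 - v in row i + 1 mod m, so all column sums agree.  Row r meets the
   labels of block r and the complements of block r - 1, so all row sums agree as soon as
   every class has the same label sum.  Such balanced labellings of the M = mc classes are
   built from layers {M p + 1, ..., M p + M}, one level per class and layer.  Pairing a layer
   with the complements of the next one adds 2Mt + 1 - M to every class.  For odd t the three
   top layers, whose complements lie close to their levels, are balanced separately. *)

section \<open>Necessary conditions\<close>

lemma sum_cell_val_filled: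
  "(\<Sum>k<n. cell_val (v k)) = (\<Sum>k\<in>{k. k < n \<and> v k \<noteq> None}. the (v k))" for n :: nat
proof -
  have "(\<Sum>k<n. cell_val (v k)) = (\<Sum>k\<in>{k. k < n \<and> v k \<noteq> None}. cell_val (v k))"
    by (rule sum.mono_neutral_right) (auto simp: cell_val_def)
  also have "\<dots> = (\<Sum>k\<in>{k. k < n \<and> v k \<noteq> None}. the (v k))"
    by (rule sum.cong) (auto simp: cell_val_def)
  finally show ?thesis .
qed

lemma sum_filled_cells:
  "(\<Sum>(a, i, j)\<in>filled_cells m n c A. the (A a i j)) =
     (\<Sum>a<c. \<Sum>i<m. \<Sum>j<n. cell_val (A a i j))"
proof -
  have "(\<Sum>a<c. \<Sum>i<m. \<Sum>j<n. cell_val (A a i j)) =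
      (\<Sum>(a, i, j)\<in>{..<c} \<times> {..<m} \<times> {..<n}. cell_val (A a i j))"
    by (simp add: sum.cartesian_product split_def)
  also have "\<dots> = (\<Sum>(a, i, j)\<in>filled_cells m n c A. cell_val (A a i j))"
    by (rule sum.mono_neutral_right) (auto simp: filled_cells_def cell_val_def split: option.splits)
  also have "\<dots> = (\<Sum>(a, i, j)\<in>filled_cells m n c A. the (A a i j))"
    by (rule sum.cong) (auto simp: filled_cells_def cell_val_def)
  finally show ?thesis by simp
qed

lemma MRS_row_sum_eq:
  assumes A: "is_MRS m n s k c A" and dims: "m * s = n * k" "0 < n * k * c"
    and x: "\<forall>a<c. \<forall>i<m. (\<Sum>j<n. cell_val (A a i j)) = x"
  shows "2 * x = s * (n * k * c + 1)"
proof -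
  let ?N = "n * k * c"
  have "bij_betw (\<lambda>(a, i, j). the (A a i j)) (filled_cells m n c A) {1..?N}"
    using A unfolding is_MRS_def by blast
  then have "(\<Sum>(a, i, j)\<in>filled_cells m n c A. the (A a i j)) = (\<Sum>v = 1..?N. v)"
    using sum.reindex_bij_betw[of _ _ _ "\<lambda>v. v"] by blast
  moreover have "(\<Sum>a<c. \<Sum>i<m. \<Sum>j<n. cell_val (A a i j)) = c * (m * x)"
    using x by simp
  ultimately have "2 * (c * (m * x)) = ?N * (?N + 1)"
    using sum_filled_cells[where A = A and m = m and n = n and c = c]
      double_gauss_sum_from_Suc_0[of ?N, where 'a = nat] by simp
  then have "?N * (2 * x) = ?N * (s * (?N + 1))"
    by (metis (no_types, lifting) dims(1) mult.assoc mult.left_commute)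
  then show ?thesis using dims(2) by simp
qed

lemma card_2_other: "card S = 2 \<Longrightarrow> a \<in> S \<Longrightarrow> \<exists>b. b \<noteq> a \<and> S = {a, b}"
  by (auto simp: card_2_iff)

lemma no_square_MRS_2_2:
  assumes "0 < n" "0 < c"
  shows "\<not> is_MRS n n 2 2 c A"
proof
  assume A: "is_MRS n n 2 2 c A"
  let ?v = "\<lambda>i j. the (A 0 i j)"
  obtain x y where x: "\<forall>a<c. \<forall>i<n. (\<Sum>j<n. cell_val (A a i j)) = x"
    and y: "\<forall>a<c. \<forall>j<n. (\<Sum>i<n. cell_val (A a i j)) = y"
    using A unfolding is_MRS_def by blast
  have rows: "\<And>i. i < n \<Longrightarrow> card {j. j < n \<and> A 0 i j \<noteq> None} = 2"
    and cols: "\<And>j. j < n \<Longrightarrow> card {i. i < n \<and> A 0 i j \<noteq> None} = 2"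
    using A assms(2) unfolding is_MRS_def by blast+
  have inj: "inj_on (\<lambda>(a, i, j). the (A a i j)) (filled_cells n n c A)"
    using A unfolding is_MRS_def by (auto dest: bij_betw_imp_inj_on)
  have "n * x = n * y"
  proof -
    have "n * x = (\<Sum>i<n. \<Sum>j<n. cell_val (A 0 i j))" using x assms(2) by simp
    also have "\<dots> = (\<Sum>j<n. \<Sum>i<n. cell_val (A 0 i j))" by (rule sum.swap)
    also have "\<dots> = n * y" using y assms(2) by simp
    finally show ?thesis .
  qed
  then have "x = y" using assms(1) by simp
  have "{j. j < n \<and> A 0 0 j \<noteq> None} \<noteq> {}"
    using rows[OF assms(1)] by (metis card.empty zero_neq_numeral)
  then obtain j0 where j0: "j0 < n" "A 0 0 j0 \<noteq> None" by blast
  obtain i1 where i1: "i1 \<noteq> 0" "{i. i < n \<and> A 0 i j0 \<noteq> None} = {0, i1}"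
    using card_2_other[OF cols[OF j0(1)], of 0] j0 assms(1) by auto
  then have i1_n: "i1 < n" "A 0 i1 j0 \<noteq> None" by blast+
  obtain j1 where j1: "j1 \<noteq> j0" "{j. j < n \<and> A 0 i1 j \<noteq> None} = {j0, j1}"
    using card_2_other[OF rows[OF i1_n(1)], of j0] j0(1) i1_n(2) by auto
  then have j1_n: "j1 < n" "A 0 i1 j1 \<noteq> None" by blast+
  have "y = (\<Sum>i<n. cell_val (A 0 i j0))" using y assms(2) j0(1) by simp
  also have "\<dots> = ?v 0 j0 + ?v i1 j0" unfolding sum_cell_val_filled i1(2) using i1(1) by simp
  finally have "y = ?v 0 j0 + ?v i1 j0" .
  have "x = (\<Sum>j<n. cell_val (A 0 i1 j))" using x assms(2) i1_n(1) by simp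
  also have "\<dots> = ?v i1 j0 + ?v i1 j1" unfolding sum_cell_val_filled j1(2) using j1(1) by simp
  finally have "x = ?v i1 j0 + ?v i1 j1" .
  with \<open>x = y\<close> \<open>y = ?v 0 j0 + ?v i1 j0\<close> have "?v i1 j1 = ?v 0 j0" by simp
  moreover have "(0, i1, j1) \<in> filled_cells n n c A" "(0, 0, j0) \<in> filled_cells n n c A"
    using assms i1_n j1_n j0 by (auto simp: filled_cells_def)
  ultimately have "(0, i1, j1) = (0::nat, 0::nat, j0)"
    using inj_onD[OF inj, of "(0, i1, j1)" "(0, 0, j0)"] by simp
  then show False using i1(1) by simp
qed

section \<open>Cyclic arrays from balanced labellings\<close>

definition balanced_labelling :: "nat \<Rightarrow> nat \<Rightarrow> (nat \<times> nat \<Rightarrow> nat) \<Rightarrow> bool" where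
  "balanced_labelling M t f \<longleftrightarrow>
     bij_betw (\<lambda>(x, b). if b then f x else 2 * (M * t) + 1 - f x)
       (({..<M} \<times> {..<t}) \<times> UNIV) {1..2 * (M * t)} \<and>
     (\<exists>S. \<forall>g<M. (\<Sum>p<t. f (g, p)) = S)"

lemma sum_lessThan_mult_nat: "(\<Sum>j<m * t. F j) = (\<Sum>i<m. \<Sum>p<t. F (i * t + p :: nat))"
proof -
  have "sum F {i * t..<i * t + t} = (\<Sum>p<t. F (i * t + p))" for i
    using sum.shift_bounds_nat_ivl[of F 0 "i * t" t] by (simp add: add.commute lessThan_atLeast0)
  then show ?thesis by (simp flip: sum.nat_group)
qed

lemma mult_add_less_mult: "a < c \<Longrightarrow> i < m \<Longrightarrow> a * m + i < c * (m :: nat)"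
proof -
  assume "a < c" "i < m"
  then have "a * m + i < Suc a * m" by simp
  also have "\<dots> \<le> c * m" using \<open>a < c\<close> by (intro mult_le_mono1) simp
  finally show ?thesis .
qed

lemma Suc_mod_neq: "2 \<le> m \<Longrightarrow> i < m \<Longrightarrow> Suc i mod m \<noteq> i"
  by (cases "Suc i = m") auto

lemma Suc_mod_eq_iff: "i < m \<Longrightarrow> r < m \<Longrightarrow> r = Suc i mod m \<longleftrightarrow> i = (r + m - 1) mod m"
  by (cases "Suc i = m"; cases r) (auto simp: mod_if)

definition cyclic_array ::
    "nat \<Rightarrow> nat \<Rightarrow> nat \<Rightarrow> (nat \<times> nat \<Rightarrow> nat) \<Rightarrow> nat \<Rightarrow> nat \<Rightarrow> nat \<Rightarrow> nat option" where
  "cyclic_array m t c f a r j =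
     (let i = j div t; v = f (a * m + i, j mod t) in
      if r = i then Some v else if r = Suc i mod m then Some (2 * (m * c * t) + 1 - v) else None)"

definition cyclic_cell :: "nat \<Rightarrow> nat \<Rightarrow> (nat \<times> nat) \<times> bool \<Rightarrow> nat \<times> nat \<times> nat" where
  "cyclic_cell m t =
     (\<lambda>((g, p), b). (g div m, if b then g mod m else Suc (g mod m) mod m, g mod m * t + p))"

context
  fixes m t c :: nat and f :: "nat \<times> nat \<Rightarrow> nat"
  assumes m: "2 \<le> m"
begin

lemma sum_column_cyclic_array:
  assumes "\<phi> None = 0" "j < m * t"
  shows "(\<Sum>r<m. \<phi> (cyclic_array m t c f a r j)) =
    \<phi> (Some (f (a * m + j div t, j mod t))) +
    \<phi> (Some (2 * (m * c * t) + 1 - f (a * m + j div t, j mod t)))"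
proof -
  let ?i = "j div t"
  have i: "?i < m" using assms(2) by (simp add: less_mult_imp_div_less)
  have "\<phi> (cyclic_array m t c f a r j) =
      (if r = ?i then \<phi> (Some (f (a * m + ?i, j mod t))) else 0) +
      (if r = Suc ?i mod m then \<phi> (Some (2 * (m * c * t) + 1 - f (a * m + ?i, j mod t))) else 0)" for r
    using Suc_mod_neq[OF m i] assms(1) by (auto simp: cyclic_array_def Let_def)
  then show ?thesis using i by (simp add: sum.distrib)
qed

lemma sum_row_cyclic_array:
  assumes "\<phi> None = 0" "r < m"
  shows "(\<Sum>j<m * t. \<phi> (cyclic_array m t c f a r j)) =
    (\<Sum>p<t. \<phi> (Some (f (a * m + r, p)))) +
    (\<Sum>p<t. \<phi> (Some (2 * (m * c * t) + 1 - f (a * m + (r + m - 1) mod m, p))))"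
proof -
  let ?r' = "(r + m - 1) mod m"
  have "(\<Sum>p<t. \<phi> (cyclic_array m t c f a r (i * t + p))) =
      (if i = r then \<Sum>p<t. \<phi> (Some (f (a * m + i, p))) else 0) +
      (if i = ?r' then \<Sum>p<t. \<phi> (Some (2 * (m * c * t) + 1 - f (a * m + i, p))) else 0)"
    if i: "i < m" for i
  proof -
    have "r = Suc i mod m \<longleftrightarrow> i = ?r'" using Suc_mod_eq_iff[OF i assms(2)] .
    then show ?thesis
      using Suc_mod_neq[OF m i] assms(1)
      by (auto simp: cyclic_array_def Let_def sum.distrib intro!: sum.cong)
  qed
  then show ?thesis
    using assms(2) m by (simp add: sum_lessThan_mult_nat sum.distrib)
qed

lemma bij_betw_cyclic_cell:
  "bij_betw (cyclic_cell m t) (({..<m * c} \<times> {..<t}) \<times> UNIV)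
     (filled_cells m (m * t) c (cyclic_array m t c f))"
proof -
  let ?X = "({..<m * c} \<times> {..<t}) \<times> UNIV" and ?F = "filled_cells m (m * t) c (cyclic_array m t c f)"
  let ?inv = "\<lambda>(a, r, j). ((a * m + j div t, j mod t), r = j div t)"
  have "\<forall>x\<in>?X. ?inv (cyclic_cell m t x) = x"
    using Suc_mod_neq[OF m] m by (auto simp: cyclic_cell_def)
  moreover have "\<forall>y\<in>?F. cyclic_cell m t (?inv y) = y"
    by (auto simp: cyclic_cell_def filled_cells_def cyclic_array_def Let_def less_mult_imp_div_less
        split: if_splits)
  moreover have "cyclic_cell m t ` ?X \<subseteq> ?F"
    using m mult_add_less_mult[of "_ mod m" m _ t]
    by (auto simp: cyclic_cell_def filled_cells_def cyclic_array_def Let_def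
        less_mult_imp_div_less mult.commute)
  moreover have "?inv ` ?F \<subseteq> ?X"
    using mult_add_less_mult[of _ c "_ div t" m]
    by (auto simp: filled_cells_def less_mult_imp_div_less mult.commute intro!: mod_less_divisor
        intro: gr0I)
  ultimately show ?thesis by (rule bij_betw_byWitness)
qed

lemma bij_betw_cyclic_array_values:
  assumes "bij_betw (\<lambda>(x, b). if b then f x else 2 * (m * c * t) + 1 - f x)
    (({..<m * c} \<times> {..<t}) \<times> UNIV) {1..2 * (m * c * t)}"
  shows "bij_betw (\<lambda>(a, r, j). the (cyclic_array m t c f a r j))
    (filled_cells m (m * t) c (cyclic_array m t c f)) {1..2 * (m * c * t)}"
proof -
  have "bij_betw ((\<lambda>(a, r, j). the (cyclic_array m t c f a r j)) \<circ> cyclic_cell m t)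
      (({..<m * c} \<times> {..<t}) \<times> UNIV) {1..2 * (m * c * t)}"
    using assms
  proof (rule bij_betw_cong[THEN iffD1, rotated])
    fix x :: "(nat \<times> nat) \<times> bool" assume "x \<in> ({..<m * c} \<times> {..<t}) \<times> UNIV"
    then show "(\<lambda>(x, b). if b then f x else 2 * (m * c * t) + 1 - f x) x =
        ((\<lambda>(a, r, j). the (cyclic_array m t c f a r j)) \<circ> cyclic_cell m t) x"
      using Suc_mod_neq[OF m] m by (auto simp: cyclic_cell_def cyclic_array_def Let_def)
  qed
  then show ?thesis
    using bij_betw_comp_iff[OF bij_betw_cyclic_cell] by blast
qed

lemma is_MRS_cyclic_array:
  assumes "balanced_labelling (m * c) t f"
  shows "is_MRS m (m * t) (2 * t) 2 c (cyclic_array m t c f)"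
proof -
  let ?A = "cyclic_array m t c f" and ?N = "2 * (m * c * t)"
  obtain S where S: "\<And>g. g < m * c \<Longrightarrow> (\<Sum>p<t. f (g, p)) = S"
    and bij: "bij_betw (\<lambda>(x, b). if b then f x else ?N + 1 - f x)
      (({..<m * c} \<times> {..<t}) \<times> UNIV) {1..?N}"
    using assms unfolding balanced_labelling_def by blast
  have class_lt: "a * m + i < m * c" if "a < c" "i < m" for a i
    using mult_add_less_mult[OF that] by (simp add: mult.commute)
  have f_le: "f (g, p) \<le> ?N + 1" if "g < m * c" "p < t" for g p
    using bij_betw_apply[OF bij, of "((g, p), True)"] that by auto
  have row_sum: "(\<Sum>j<m * t. cell_val (?A a r j)) = t * (?N + 1)" if "a < c" "r < m" for a r
  proof -
    let ?r' = "(r + m - 1) mod m"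
    have r': "?r' < m" using m by simp
    have "(\<Sum>p<t. ?N + 1 - f (a * m + ?r', p)) = t * (?N + 1) - S"
      using sum_subtractf_nat[of "{..<t}" "\<lambda>p. f (a * m + ?r', p)" "\<lambda>_. ?N + 1"]
        f_le[OF class_lt[OF that(1) r']] S[OF class_lt[OF that(1) r']] by simp
    moreover have "S \<le> t * (?N + 1)"
      using sum_mono[of "{..<t}" "\<lambda>p. f (a * m + r, p)" "\<lambda>_. ?N + 1"]
        f_le[OF class_lt[OF that]] S[OF class_lt[OF that]] by simp
    ultimately show ?thesis
      using sum_row_cyclic_array[of cell_val r] that S[OF class_lt[OF that]]
      by (simp add: cell_val_def)
  qed
  have col_sum: "(\<Sum>r<m. cell_val (?A a r j)) = ?N + 1" if "a < c" "j < m * t" for a j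
  proof -
    have "j div t < m" "j mod t < t"
      using that(2) by (auto simp: less_mult_imp_div_less intro!: mod_less_divisor intro: gr0I)
    then show ?thesis
      using sum_column_cyclic_array[of cell_val j] that(2) f_le[OF class_lt[OF that(1)]]
      by (simp add: cell_val_def)
  qed
  have row_card: "card {j. j < m * t \<and> ?A a r j \<noteq> None} = 2 * t" if "r < m" for a r
  proof -
    have "{j. j < m * t \<and> ?A a r j \<noteq> None} = {..<m * t} \<inter> {j. ?A a r j \<noteq> None}" by auto
    then show ?thesis
      using sum_row_cyclic_array[of "\<lambda>v. of_bool (v \<noteq> None) :: nat" r] that by simp
  qed
  have col_card: "card {r. r < m \<and> ?A a r j \<noteq> None} = 2" if "j < m * t" for a j
  proof -
    have "{r. r < m \<and> ?A a r j \<noteq> None} = {..<m} \<inter> {r. ?A a r j \<noteq> None}" by auto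
    then show ?thesis
      using sum_column_cyclic_array[of "\<lambda>v. of_bool (v \<noteq> None) :: nat" j] that by simp
  qed
  have "bij_betw (\<lambda>(a, r, j). the (?A a r j)) (filled_cells m (m * t) c ?A) {1..m * t * 2 * c}"
    using bij_betw_cyclic_array_values bij by (simp add: ac_simps)
  then show ?thesis
    unfolding is_MRS_def using row_card col_card row_sum col_sum by blast
qed

end

section \<open>Construction of balanced labellings\<close>

lemma bij_betw_layers:
  fixes \<pi> :: "nat \<Rightarrow> nat \<Rightarrow> nat"
  assumes "\<And>p. p < t \<Longrightarrow> bij_betw (\<pi> p) {..<M} {..<M}"
  shows "bij_betw (\<lambda>(g, p). M * p + \<pi> p g + 1) ({..<M} \<times> {..<t}) {1..M * t}"
proof -
  let ?h = "\<lambda>(g, p). M * p + \<pi> p g + 1"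
  have \<pi>_lt: "\<pi> p g < M" if "p < t" "g < M" for p g
    using bij_betw_apply[OF assms[OF that(1)]] that(2) by simp
  have inj: "inj_on ?h ({..<M} \<times> {..<t})"
  proof (rule inj_onI, clarsimp)
    fix g p g' p'
    assume g: "g < M" "g' < M" and p: "p < t" "p' < t"
      and eq: "M * p + \<pi> p g = M * p' + \<pi> p' g'"
    have "p = p'" "\<pi> p g = \<pi> p' g'"
      using arg_cong[OF eq, of "\<lambda>x. x div M"] arg_cong[OF eq, of "\<lambda>x. x mod M"]
        \<pi>_lt[OF p(1) g(1)] \<pi>_lt[OF p(2) g(2)] by auto
    then show "g = g' \<and> p = p'"
      using bij_betw_imp_inj_on[OF assms[OF p(1)]] g by (auto dest: inj_onD)
  qed
  have "M * p + \<pi> p g + 1 \<le> M * t" if "g < M" "p < t" for g p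
  proof -
    have "M * p + \<pi> p g + 1 \<le> M * Suc p" using \<pi>_lt[OF that(2,1)] by simp
    also have "\<dots> \<le> M * t" using that(2) mult_le_mono2[of "Suc p" t M] by simp
    finally show ?thesis .
  qed
  then have "?h ` ({..<M} \<times> {..<t}) \<subseteq> {1..M * t}" by auto
  moreover have "card (?h ` ({..<M} \<times> {..<t})) = card {1..M * t}"
    using card_image[OF inj] by (simp add: card_cartesian_product)
  ultimately show ?thesis
    using inj by (simp add: bij_betw_def card_subset_eq)
qed

lemma bij_betw_complement_pairs:
  fixes h f :: "'a \<Rightarrow> nat"
  assumes h: "bij_betw h A {1..K}"
    and f: "\<And>x. x \<in> A \<Longrightarrow> f x = h x \<or> f x = 2 * K + 1 - h x"
  shows "bij_betw (\<lambda>(x, b). if b then f x else 2 * K + 1 - f x) (A \<times> UNIV) {1..2 * K}"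
proof -
  let ?u = "\<lambda>(x, b). if b then f x else 2 * K + 1 - f x"
  have h_range: "1 \<le> h x \<and> h x \<le> K" if "x \<in> A" for x
    using bij_betw_apply[OF h that] by simp
  have u_cases: "?u (x, b) = h x \<or> ?u (x, b) = 2 * K + 1 - h x" if "x \<in> A" for x b
    using f[OF that] h_range[OF that] by auto
  have "x = y \<and> b = b'" if x: "x \<in> A" and y: "y \<in> A" and eq: "?u (x, b) = ?u (y, b')"
    for x y b b'
  proof -
    have "h x = h y"
      using u_cases[OF x, of b] u_cases[OF y, of b'] h_range[OF x] h_range[OF y] eq by auto
    then have "x = y" using bij_betw_imp_inj_on[OF h] x y by (auto dest: inj_onD)
    moreover have "f x \<noteq> 2 * K + 1 - f x" by presburger
    ultimately show ?thesis using eq by (auto split: if_splits)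
  qed
  then have inj: "inj_on ?u (A \<times> UNIV)" by (auto intro!: inj_onI)
  have "?u ` (A \<times> UNIV) = {1..2 * K}"
  proof
    show "?u ` (A \<times> UNIV) \<subseteq> {1..2 * K}"
    proof
      fix v assume "v \<in> ?u ` (A \<times> UNIV)"
      then obtain x b where "x \<in> A" "v = ?u (x, b)" by blast
      then show "v \<in> {1..2 * K}" using u_cases[of x b] h_range[of x] by auto
    qed
  next
    show "{1..2 * K} \<subseteq> ?u ` (A \<times> UNIV)"
    proof
      fix v assume v: "v \<in> {1..2 * K}"
      have "v \<in> h ` A \<or> 2 * K + 1 - v \<in> h ` A"
        using v bij_betw_imp_surj_on[OF h] by auto
      then obtain x where x: "x \<in> A" "h x = v \<or> h x = 2 * K + 1 - v" by auto
      then have "v = ?u (x, True) \<or> v = ?u (x, False)"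
        using f[OF x(1)] h_range[OF x(1)] v by auto
      then show "v \<in> ?u ` (A \<times> UNIV)" using x(1) by blast
    qed
  qed
  with inj show ?thesis by (simp add: bij_betw_def)
qed

(* Level M p + row_perm M t p g + 1 of class g lies in layer p.  Outside the top three layers
   of an odd t, row_perm is the identity and the odd layers are flipped to their complements,
   so layers 2k and 2k + 1 contribute (2kM + g + 1) + (2Mt - (2k + 1)M - g) = 2Mt + 1 - M.
   In the top three layers 2 triple_perm M g is g + M or M - 1 - g up to the parity of M, and
   flipping the top level of the even classes then makes their sum independent of g. *)
definition triple_perm :: "nat \<Rightarrow> nat \<Rightarrow> nat" where
  "triple_perm M g = (if even g then (g + M) div 2 else (M - 1 - g) div 2)"

definition row_perm :: "nat \<Rightarrow> nat \<Rightarrow> nat \<Rightarrow> nat \<Rightarrow> nat" where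
  "row_perm M t p g =
     (if even t \<or> p + 3 < t then g else if p + 1 < t then M - 1 - triple_perm M g else M - 1 - g)"

definition flipped :: "nat \<Rightarrow> nat \<Rightarrow> nat \<Rightarrow> bool" where
  "flipped t g p = (if even t \<or> p + 3 < t then odd p else p + 1 = t \<and> even g)"

definition level :: "nat \<Rightarrow> nat \<Rightarrow> nat \<Rightarrow> nat \<Rightarrow> nat" where
  "level M t g p = M * p + row_perm M t p g + 1"

definition label :: "nat \<Rightarrow> nat \<Rightarrow> nat \<Rightarrow> nat \<Rightarrow> nat" where
  "label M t g p = (if flipped t g p then 2 * (M * t) + 1 - level M t g p else level M t g p)"

lemma bij_betw_triple_perm: "bij_betw (triple_perm M) {..<M} {..<M}"
proof -
  have maps: "triple_perm M ` {..<M} \<subseteq> {..<M}"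
    by (auto simp: triple_perm_def)
  have "inj_on (triple_perm M) {..<M}"
    by (rule inj_onI) (auto simp: triple_perm_def split: if_splits elim!: evenE oddE)
  with maps show ?thesis by (simp add: bij_betw_def endo_inj_surj)
qed

lemma bij_betw_reflect: "bij_betw (\<lambda>g. M - 1 - g) {..<M} {..<M::nat}"
  by (rule bij_betw_byWitness[where f' = "\<lambda>g. M - 1 - g"]) (auto simp: image_subset_iff)

lemma bij_betw_row_perm: "bij_betw (row_perm M t p) {..<M} {..<M}"
proof -
  have "row_perm M t p = id \<or> row_perm M t p = (\<lambda>g. M - 1 - g) \<circ> triple_perm M \<or>
      row_perm M t p = (\<lambda>g. M - 1 - g)"
    by (auto simp: row_perm_def fun_eq_iff)
  then show ?thesis
    using bij_betw_id bij_betw_trans[OF bij_betw_triple_perm bij_betw_reflect] bij_betw_reflect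
    by (elim disjE) (simp_all only:)
qed

lemma bij_betw_level: "bij_betw (\<lambda>(g, p). level M t g p) ({..<M} \<times> {..<t}) {1..M * t}"
  unfolding level_def by (rule bij_betw_layers[OF bij_betw_row_perm])

lemma sum_label_pairs:
  assumes "2 * k \<le> t" "even t \<or> 2 * k + 3 \<le> t" "g < M"
  shows "(\<Sum>p<2 * k. label M t g p) = k * (2 * (M * t) + 1 - M)"
  using assms(1,2)
proof (induction k)
  case 0
  then show ?case by simp
next
  case (Suc k)
  have "label M t g (2 * k) = M * (2 * k) + g + 1"
    using Suc.prems by (auto simp: label_def level_def row_perm_def flipped_def)
  moreover have "label M t g (2 * k + 1) = 2 * (M * t) + 1 - (M * (2 * k + 1) + g + 1)"
    using Suc.prems by (auto simp: label_def level_def row_perm_def flipped_def)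
  moreover have "M * (2 * k + 1) + g + 1 \<le> M * t"
  proof -
    have "M * (2 * k + 1) + g + 1 \<le> M * (2 * k + 2)" using assms(3) by simp
    also have "\<dots> \<le> M * t" using Suc.prems(1) mult_le_mono2[of "2 * k + 2" t M] by simp
    finally show ?thesis .
  qed
  ultimately have "label M t g (2 * k) + label M t g (2 * k + 1) = 2 * (M * t) + 1 - M"
    by simp
  moreover have "(\<Sum>p<2 * k. label M t g p) = k * (2 * (M * t) + 1 - M)"
    using Suc.IH Suc.prems by auto
  ultimately show ?case by simp
qed

lemma label_triple_sum:
  assumes "g < M"
  shows "label M (2 * u + 3) g (2 * u) + label M (2 * u + 3) g (2 * u + 1)
      + label M (2 * u + 3) g (2 * u + 2) + 4 * M = 3 * (M * (2 * u + 3)) + 1 + M mod 2"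
proof -
  let ?k = "triple_perm M g"
  have k: "?k < M" using assms by (auto simp: triple_perm_def)
  have "label M (2 * u + 3) g (2 * u) = M * (2 * u + 1) - ?k"
    using k by (auto simp: label_def level_def row_perm_def flipped_def algebra_simps)
  moreover have "label M (2 * u + 3) g (2 * u + 1) = M * (2 * u + 2) - ?k"
    using k by (auto simp: label_def level_def row_perm_def flipped_def algebra_simps)
  moreover have "label M (2 * u + 3) g (2 * u + 2) =
      (if even g then M * (2 * u + 3) + g + 1 else M * (2 * u + 3) - g)"
    using assms by (auto simp: label_def level_def row_perm_def flipped_def algebra_simps)
  moreover have "2 * ?k + M mod 2 = (if even g then g + M else M - 1 - g)"
  proof (cases "even g")
    case True
    have "2 * ((g + M) div 2) + (g + M) mod 2 = g + M" by (rule mult_div_mod_eq)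
    moreover have "(g + M) mod 2 = M mod 2" using True by (auto elim!: evenE)
    ultimately show ?thesis using True by (simp add: triple_perm_def)
  next
    case False
    then have "even (M - 1 - g) \<longleftrightarrow> even M" using assms by (auto elim!: oddE)
    then have "2 * ((M - 1 - g) div 2) + M mod 2 = M - 1 - g"
      by (metis mult_div_mod_eq mod2_eq_if)
    then show ?thesis using False by (simp add: triple_perm_def)
  qed
  ultimately show ?thesis
    using assms k by (auto simp: algebra_simps)
qed

lemma sum_label_independent:
  assumes "2 \<le> t" "g < M" "g' < M"
  shows "(\<Sum>p<t. label M t g p) = (\<Sum>p<t. label M t g' p)"
proof (cases "even t")
  case True
  then obtain k where "t = 2 * k" by (elim evenE)
  then show ?thesis using sum_label_pairs[of k t] assms by simp
next
  case False
  obtain u where t: "t = 2 * u + 3"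
    using False assms(1) by (intro that[of "(t - 3) div 2"]) (auto elim!: oddE)
  have "(\<Sum>p<t. label M t h p) + 4 * M = u * (2 * (M * t) + 1 - M) + 3 * (M * t) + 1 + M mod 2"
    if "h < M" for h
  proof -
    have "(\<Sum>p<t. label M t h p) = (\<Sum>p<2 * u. label M t h p)
        + (label M t h (2 * u) + label M t h (2 * u + 1) + label M t h (2 * u + 2))"
      by (simp add: t numeral_3_eq_3)
    moreover have "(\<Sum>p<2 * u. label M t h p) = u * (2 * (M * t) + 1 - M)"
      using sum_label_pairs[of u t] that t by simp
    moreover have "label M t h (2 * u) + label M t h (2 * u + 1) + label M t h (2 * u + 2) + 4 * M
        = 3 * (M * t) + 1 + M mod 2"
      using label_triple_sum[OF that, of u] by (simp only: t)
    ultimately show ?thesis by linarith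
  qed
  then show ?thesis using assms(2,3) by (metis add_right_cancel)
qed

lemma balanced_labelling_label:
  assumes "2 \<le> t"
  shows "balanced_labelling M t (\<lambda>(g, p). label M t g p)"
  unfolding balanced_labelling_def
proof
  let ?f = "\<lambda>(g, p). label M t g p"
  let ?h = "\<lambda>(g, p). level M t g p"
  have "?f x = ?h x \<or> ?f x = 2 * (M * t) + 1 - ?h x" for x
    by (auto simp: label_def split: prod.split)
  then show "bij_betw (\<lambda>(x, b). if b then ?f x else 2 * (M * t) + 1 - ?f x)
      (({..<M} \<times> {..<t}) \<times> UNIV) {1..2 * (M * t)}"
    by (intro bij_betw_complement_pairs[OF bij_betw_level])
next
  show "\<exists>S. \<forall>g<M. (\<Sum>p<t. (\<lambda>(g, p). label M t g p) (g, p)) = S"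
  proof (intro exI allI impI)
    fix g assume "g < M"
    then show "(\<Sum>p<t. (\<lambda>(g, p). label M t g p) (g, p)) = (\<Sum>p<t. label M t 0 p)"
      using sum_label_independent[OF assms, of g M 0] by simp
  qed
qed

theorem mainTheorem5:
  fixes m n s c :: nat
  assumes "m > 0" "n > 0" "s > 0" "c > 0" "2 \<le> s" "s \<le> n" "m * s = 2 * n"
  shows "MRS_exists m n s 2 c \<longleftrightarrow> (s \<ge> 4 \<and> even s)"
proof
  assume "MRS_exists m n s 2 c"
  then obtain A where A: "is_MRS m n s 2 c A" unfolding MRS_exists_def by blast
  then obtain x where "\<forall>a<c. \<forall>i<m. (\<Sum>j<n. cell_val (A a i j)) = x"
    unfolding is_MRS_def by blast
  with A assms have "2 * x = s * (n * 2 * c + 1)" by (intro MRS_row_sum_eq) auto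
  then have "even s" by (metis dvd_triv_left even_add even_mult_iff odd_one)
  moreover have "s \<noteq> 2"
    using no_square_MRS_2_2[of n c A] A assms by auto
  ultimately show "s \<ge> 4 \<and> even s" using assms(5) by (auto elim!: evenE)
next
  assume "s \<ge> 4 \<and> even s"
  then obtain t where s: "s = 2 * t" and t: "2 \<le> t" by (auto elim!: evenE)
  have n: "n = m * t" using assms(7) s by simp
  have m: "2 \<le> m" using assms(1,2,6,7) s n by (cases "m = 1") auto
  show "MRS_exists m n s 2 c"
    unfolding MRS_exists_def n s
    using is_MRS_cyclic_array[OF m balanced_labelling_label[OF t]] by blast
qed

end
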